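(* Let $k\ge1$, let $\alpha=(\alpha_1,\dots,\alpha_k)$ and $\beta=(\beta_1,\dots,\beta_k)$ be $k$-tuples of nonnegative integers, and let $\sigma,\tau$ be permutations of $\{1,\dots,k\}$. Write $\sigma(\alpha)=(\alpha_{\sigma_1},\dots,\alpha_{\sigma_k})$ and $\tau(\beta)=(\beta_{\tau_1},\dots,\beta_{\tau_k})$. If $\tilde M_k(\sigma(\alpha),\tau(\beta))\ne0$, then $\alpha_{\sigma_1}=\cdots=\alpha_{\sigma_{k-|\alpha|}}=0$ and $\beta_{\tau_1}=\cdots=\beta_{\tau_{k-|\beta|}}=0$ (conditions that are vacuous when $|\alpha|\ge k$, resp. $|\beta|\ge k$).
   Context: $|\alpha|=\sum_i\alpha_i$. For $k$-tuples $a=(a_1,\dots,a_k)$, $b=(b_1,\dots,b_k)$ of nonnegative integers, $\tilde M_k(a,b)=(-1)^{\sum_i b_i}\det(m_{ij})_{1\le i,j\le 2k}$, where for $1\le i\le k$, $1\le j\le 2k$: $m_{ij}=\Gamma(2k-i-j+2-a_i)^{-1}$ and $m_{k+i,j}=(-1)^{i+j-1}\Gamma(2k-i-j+2-b_i)^{-1}$, with the convention $1/\Gamma(m)=0$ for $m\in\{0,-1,-2,\dots\}$. *)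

theory Defs
  imports "HOL-Analysis.Analysis"
begin

(* Determinant of an n x n matrix given as a function on {0..<n} x {0..<n},
   via the Leibniz formula (the size n varies, so no type-indexed matrices). *)
definition det_n :: "nat \<Rightarrow> (nat \<Rightarrow> nat \<Rightarrow> real) \<Rightarrow> real" where
  "det_n n A = (\<Sum>p | p permutes {0..<n}. of_int (sign p) * (\<Prod>i<n. A i (p i)))"

(* The matrix (m_ij) with 0-based indices i,j < 2k (paper index = ours + 1).
   1/Gamma is rGamma, which vanishes at 0,-1,-2,... *)
definition Mmat :: "nat \<Rightarrow> (nat \<Rightarrow> nat) \<Rightarrow> (nat \<Rightarrow> nat) \<Rightarrow> nat \<Rightarrow> nat \<Rightarrow> real" where
  "Mmat k a b i j =
     (if i < k then rGamma (of_int (2 * int k - int i - int j - int (a i)))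
      else (-1) ^ ((i - k) + j + 1) * rGamma (of_int (2 * int k - int (i - k) - int j - int (b (i - k)))))"

definition Mtilde :: "nat \<Rightarrow> (nat \<Rightarrow> nat) \<Rightarrow> (nat \<Rightarrow> nat) \<Rightarrow> real" where
  "Mtilde k a b = (-1) ^ (\<Sum>i<k. b i) * det_n (2 * k) (Mmat k a b)"

end

theory Submission
  imports Defs "Jordan_Normal_Form.Determinant"
begin

text \<open>
  If two of the first k rows of the matrix coincide, or two of the last k rows are
  proportional, the determinant vanishes. Row i of the upper block depends on i only
  through i + a i, and row k + i of the lower block, up to the sign (-1)^i, only
  through i + b i. So a nonzero determinant makes both maps i \<mapsto> i + a i and
  i \<mapsto> i + b i injective on {0..<k}. For such an injective shift, a r > 0 starts
  a chain r < r + a r < ... along which a stays positive (a zero would collide with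
  the predecessor) and which leaves {0..<k} only after total length at least k - r,
  so a r > 0 forces r \<ge> k - sum a. Permuting the entries does not change the sums.
\<close>

lemma det_n_eq_det_mat: "det_n n A = Determinant.det (mat n n (\<lambda>(i, j). A i j))"
  by (simp add: det_n_def Determinant.det_def atLeast0LessThan)

lemma det_n_proportional_rows:
  assumes "i < n" "i' < n" "i \<noteq> i'" and proportional: "\<And>j. j < n \<Longrightarrow> A i j = c * A i' j"
  shows "det_n n A = 0"
proof -
  define B where "B = mat n n (\<lambda>(r, j). if r = i then A i' j else A r j)"
  have B: "B \<in> carrier_mat n n" by (simp add: B_def)
  have "mat n n (\<lambda>(r, j). A r j) = multrow i c B"
    by (rule eq_matI) (auto simp: B_def mat_multrow_def proportional)
  then have "det_n n A = c * Determinant.det B"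
    using det_multrow[OF \<open>i < n\<close> B] by (simp add: det_n_eq_det_mat)
  moreover have "Determinant.det B = 0"
    by (rule det_identical_rows[OF B \<open>i \<noteq> i'\<close> \<open>i < n\<close> \<open>i' < n\<close>])
      (auto simp: B_def assms intro!: eq_vecI)
  ultimately show ?thesis by simp
qed

lemma Mmat_upper_row:
  "i < k \<Longrightarrow> Mmat k a b i j = rGamma (of_int (2 * int k - int (i + a i) - int j))"
  by (simp add: Mmat_def algebra_simps)

lemma Mmat_lower_row:
  "i < k \<Longrightarrow>
    Mmat k a b (k + i) j = (-1) ^ (i + j + 1) * rGamma (of_int (2 * int k - int (i + b i) - int j))"
  by (simp add: Mmat_def algebra_simps)

lemma inj_on_shifts_if_Mtilde_nonzero:
  assumes "Mtilde k a b \<noteq> 0"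
  shows "inj_on (\<lambda>i. i + a i) {..<k}" and "inj_on (\<lambda>i. i + b i) {..<k}"
proof -
  have det: "det_n (2 * k) (Mmat k a b) \<noteq> 0"
    using assms by (simp add: Mtilde_def)
  show "inj_on (\<lambda>i. i + a i) {..<k}"
  proof (rule inj_onI, rule ccontr)
    fix i j assume ij: "i \<in> {..<k}" "j \<in> {..<k}" "i + a i = j + a j" "i \<noteq> j"
    have "det_n (2 * k) (Mmat k a b) = 0"
      by (rule det_n_proportional_rows[where i = i and i' = j and c = 1])
        (use ij in \<open>auto simp: Mmat_upper_row\<close>)
    with det show False ..
  qed
  show "inj_on (\<lambda>i. i + b i) {..<k}"
  proof (rule inj_onI, rule ccontr)
    fix i j assume i: "i \<in> {..<k}" and j: "j \<in> {..<k}"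
      and shift: "i + b i = j + b j" and "i \<noteq> j"
    have sign: "(-1::real) ^ (i + l + 1) = (-1) ^ (i + j) * (-1) ^ (j + l + 1)" for l
      by (simp add: minus_one_power_iff)
    have "Mmat k a b (k + i) l = (-1) ^ (i + j) * Mmat k a b (k + j) l" for l
      using i j by (simp only: lessThan_iff Mmat_lower_row shift sign mult.assoc)
    then have "det_n (2 * k) (Mmat k a b) = 0"
      using i j \<open>i \<noteq> j\<close> by (intro det_n_proportional_rows[where i = "k + i" and i' = "k + j"]) auto
    with det show False ..
  qed
qed

lemma sum_ge_if_inj_on_shift:
  fixes a :: "nat \<Rightarrow> nat"
  assumes inj: "inj_on (\<lambda>i. i + a i) {..<k}" and "x < k" "0 < a x"
  shows "k - x \<le> (\<Sum>i\<in>{x..<k}. a i)"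
  using assms(2,3)
proof (induction x rule: measure_induct_rule[where f = "\<lambda>x. k - x"])
  case (less x)
  have split: "(\<Sum>i\<in>{x..<k}. a i) = a x + (\<Sum>i\<in>{Suc x..<k}. a i)"
    using less.prems by (simp add: sum.atLeast_Suc_lessThan)
  show ?case
  proof (cases "x + a x < k")
    case False
    then show ?thesis using split by linarith
  next
    case True
    define y where "y = x + a x"
    have "y < k" "x < y"
      using True less.prems by (simp_all add: y_def)
    have "0 < a y"
    proof (rule ccontr)
      assume "\<not> 0 < a y"
      then have "y + a y = x + a x" by (simp add: y_def)
      then have "y = x"
        by (rule inj_onD[OF inj]) (use \<open>y < k\<close> less.prems in auto)
      with \<open>x < y\<close> show False by simp
    qed
    with \<open>y < k\<close> \<open>x < y\<close> have "k - y \<le> (\<Sum>i\<in>{y..<k}. a i)"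
      by (intro less.IH) auto
    also have "\<dots> \<le> (\<Sum>i\<in>{Suc x..<k}. a i)"
      using \<open>x < y\<close> by (intro sum_mono2) auto
    finally show ?thesis using split \<open>y < k\<close> y_def by linarith
  qed
qed

lemma eq_0_below_if_inj_on_shift:
  fixes a :: "nat \<Rightarrow> nat"
  assumes inj: "inj_on (\<lambda>i. i + a i) {..<k}" and r: "r < k - (\<Sum>i<k. a i)"
  shows "a r = 0"
proof (rule ccontr)
  assume "a r \<noteq> 0"
  then have "k - r \<le> (\<Sum>i\<in>{r..<k}. a i)"
    using sum_ge_if_inj_on_shift[OF inj] r by simp
  also have "\<dots> \<le> (\<Sum>i<k. a i)"
    by (rule sum_mono2) auto
  finally show False using r by linarith
qed

theorem lemma5:
  fixes k :: nat and \<alpha> \<beta> :: "nat \<Rightarrow> nat" and \<sigma> \<tau> :: "nat \<Rightarrow> nat"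
  assumes "k \<ge> 1"
    and "\<sigma> permutes {0..<k}" and "\<tau> permutes {0..<k}"
    and "Mtilde k (\<alpha> \<circ> \<sigma>) (\<beta> \<circ> \<tau>) \<noteq> 0"
  shows "(\<forall>r < k - (\<Sum>i<k. \<alpha> i). \<alpha> (\<sigma> r) = 0)
       \<and> (\<forall>r < k - (\<Sum>i<k. \<beta> i). \<beta> (\<tau> r) = 0)"
proof -
  have sums: "(\<Sum>i<k. (\<alpha> \<circ> \<sigma>) i) = (\<Sum>i<k. \<alpha> i)" "(\<Sum>i<k. (\<beta> \<circ> \<tau>) i) = (\<Sum>i<k. \<beta> i)"
    using sum.permute[OF assms(2), of \<alpha>] sum.permute[OF assms(3), of \<beta>]
    by (simp_all add: atLeast0LessThan)
  show ?thesis
    using eq_0_below_if_inj_on_shift[OF inj_on_shifts_if_Mtilde_nonzero(1)[OF assms(4)]]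
      eq_0_below_if_inj_on_shift[OF inj_on_shifts_if_Mtilde_nonzero(2)[OF assms(4)]]
    unfolding sums by simp
qed

end
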